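(* Let $p$ be a prime, let $n\geqslant 2$ be an integer, let $m\geqslant 0$ be an integer and let $k\geqslant 2$ be an integer not divisible by $p$. For positive integers $a,r$ let $w(a,r)=\frac{1}{r}\sum_{d\mid r}\mu(d)\,a^{r/d}$, where $\mu$ is the Möbius function. Then $$\frac{w(n^{p^m},k)}{p^m\, w(n,p^mk)} \geqslant 1 - \frac{k}{2n^{p^mk/2}}.$$ *)

theory Defs
  imports Complex_Main "HOL-Computational_Algebra.Squarefree"
begin

definition moebius_mu :: "nat \<Rightarrow> int" where
  "moebius_mu d = (if squarefree d then (-1) ^ card (prime_factors d) else 0)"

definition necklace_w :: "nat \<Rightarrow> nat \<Rightarrow> real" where
  "necklace_w a r = (1 / real r) * (\<Sum>d \<in> {d. d dvd r}. real_of_int (moebius_mu d) * real a ^ (r div d))"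

end

theory Submission
  imports Defs
begin

text \<open>Write \<open>S(a, r) = r w(a, r)\<close>. As \<open>p\<close> does not divide \<open>k\<close>, the only divisors of \<open>p\<^sup>m k\<close>
  with nonzero Moebius value are \<open>d\<close> and \<open>p d\<close> for \<open>d\<close> dividing \<open>k\<close>, and \<open>\<mu>(p d) = -\<mu>(d)\<close>;
  hence \<open>S(n, p\<^sup>m k) = S(n^p\<^sup>m, k) - S(n^p\<^sup>m\<^sup>-\<^sup>1, k)\<close> for \<open>m \<ge> 1\<close>.
  Every \<open>S(a, r)\<close> with \<open>a \<ge> 2\<close> is positive: the term \<open>a\<^sup>r\<close> dominates the others, whose
  exponents \<open>r/d\<close> are distinct and smaller than \<open>r\<close>. So the quotient in question is
  \<open>S(n^p\<^sup>m, k) / S(n, p\<^sup>m k) \<ge> 1\<close>, and the right-hand side of the bound is at most \<open>1\<close>.\<close>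

definition moebius_power_sum :: "nat \<Rightarrow> nat \<Rightarrow> real" where
  "moebius_power_sum a r = (\<Sum>d | d dvd r. real_of_int (moebius_mu d) * real a ^ (r div d))"

lemma necklace_w_eq_moebius_power_sum: "necklace_w a r = moebius_power_sum a r / real r"
  unfolding necklace_w_def moebius_power_sum_def by simp

lemma abs_moebius_mu_le_1: "\<bar>moebius_mu d\<bar> \<le> 1"
  unfolding moebius_mu_def by simp

lemma moebius_mu_eq_0_if_prime_square_dvd:
  assumes "prime p" "p\<^sup>2 dvd d"
  shows "moebius_mu d = 0"
  using assms squarefreeD[of d p] unfolding moebius_mu_def by auto

lemma moebius_mu_prime_mult:
  assumes "prime p" "\<not> p dvd e" "e > 0"
  shows "moebius_mu (p * e) = - moebius_mu e"
proof -
  have "coprime p e"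
    using assms by (simp add: prime_imp_coprime)
  then have squarefree: "squarefree (p * e) \<longleftrightarrow> squarefree e"
    using squarefree_mult_coprime squarefree_prime[OF assms(1)] squarefree_mono[of e "p * e"]
    by auto
  have "prime_factors (p * e) = insert p (prime_factors e)"
    using prime_factors_product[of p e] assms prime_prime_factors[OF assms(1)]
    by (auto simp: prime_gt_0_nat)
  moreover have "p \<notin> prime_factors e"
    using assms by auto
  ultimately have "card (prime_factors (p * e)) = Suc (card (prime_factors e))"
    by simp
  then show ?thesis
    unfolding moebius_mu_def using squarefree by simp
qed

lemma dvd_prime_power_mult_iff:
  fixes p d k :: nat
  assumes "prime p" "\<not> p dvd d"
  shows "d dvd p ^ j * k \<longleftrightarrow> d dvd k"
proof -
  have "coprime d (p ^ j)"
    using assms prime_imp_coprime[of p d] by (simp add: coprime_commute)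
  then show ?thesis
    using coprime_dvd_mult_right_iff by blast
qed

lemma sum_divisors_prime_mult:
  fixes f :: "nat \<Rightarrow> 'a::comm_monoid_add"
  assumes "prime p" "N > 0"
  shows "(\<Sum>d | d dvd p * N. f d)
           = (\<Sum>d | d dvd p * N \<and> \<not> p dvd d. f d) + (\<Sum>e | e dvd N. f (p * e))"
proof -
  have p_pos: "p > 0"
    using assms(1) prime_gt_0_nat by blast
  have fin: "finite {d. d dvd p * N}"
    using assms p_pos by simp
  have multiples: "{d. d dvd p * N \<and> p dvd d} = (*) p ` {e. e dvd N}"
    using p_pos by (auto elim!: dvdE)
  have "(\<Sum>d | d dvd p * N. f d)
          = (\<Sum>d | d dvd p * N \<and> \<not> p dvd d. f d) + (\<Sum>d | d dvd p * N \<and> p dvd d. f d)"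
    using fin by (subst sum.union_disjoint[symmetric]) (auto intro: sum.cong)
  also have "(\<Sum>d | d dvd p * N \<and> p dvd d. f d) = (\<Sum>e | e dvd N. f (p * e))"
    unfolding multiples using p_pos by (subst sum.reindex) (auto intro: inj_onI)
  finally show ?thesis .
qed

lemma sum_moebius_divisors_prime_power_mult:
  fixes g :: "nat \<Rightarrow> real"
  assumes p: "prime p" and "\<not> p dvd k" "k > 0" "m \<ge> 1"
  shows "(\<Sum>d | d dvd p ^ m * k. moebius_mu d * g d)
           = (\<Sum>d | d dvd k. moebius_mu d * (g d - g (p * d)))"
proof -
  define N where "N = p ^ (m - 1) * k"
  have p_pos: "p > 0"
    using p prime_gt_0_nat by blast
  have N_pos: "N > 0"
    using assms p_pos unfolding N_def by simp
  have pN: "p ^ m * k = p * N"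
    using \<open>m \<ge> 1\<close> unfolding N_def by (cases m) auto
  have coprime_part: "{d. d dvd p * N \<and> \<not> p dvd d} = {d. d dvd k}"
    unfolding pN[symmetric] using dvd_prime_power_mult_iff[OF p] \<open>\<not> p dvd k\<close>
    by (auto dest: dvd_trans)
  have "(\<Sum>e | e dvd N. moebius_mu (p * e) * g (p * e))
          = (\<Sum>e | e dvd k. moebius_mu (p * e) * g (p * e))"
  proof (rule sum.mono_neutral_right)
    show "finite {e. e dvd N}"
      using N_pos by simp
    show "{e. e dvd k} \<subseteq> {e. e dvd N}"
      unfolding N_def by auto
    show "\<forall>e \<in> {e. e dvd N} - {e. e dvd k}. moebius_mu (p * e) * g (p * e) = 0"
    proof
      fix e assume "e \<in> {e. e dvd N} - {e. e dvd k}"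
      then have "p dvd e"
        using dvd_prime_power_mult_iff[OF p] unfolding N_def by auto
      then have "p\<^sup>2 dvd p * e"
        by (simp add: power2_eq_square)
      then show "moebius_mu (p * e) * g (p * e) = 0"
        using moebius_mu_eq_0_if_prime_square_dvd[OF p] by simp
    qed
  qed
  also have "\<dots> = (\<Sum>e | e dvd k. - (moebius_mu e * g (p * e)))"
  proof (rule sum.cong[OF refl])
    fix e assume "e \<in> {e. e dvd k}"
    then have "\<not> p dvd e" "e > 0"
      using \<open>\<not> p dvd k\<close> \<open>k > 0\<close> by (auto dest: dvd_trans intro: dvd_pos_nat)
    then show "moebius_mu (p * e) * g (p * e) = - (moebius_mu e * g (p * e))"
      by (simp add: moebius_mu_prime_mult[OF p])
  qed
  finally show ?thesis
    unfolding pN sum_divisors_prime_mult[OF p N_pos] coprime_part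
    by (simp add: sum_negf sum_subtractf[symmetric] algebra_simps)
qed

lemma moebius_power_sum_prime_power_mult:
  assumes "prime p" "\<not> p dvd k" "k > 0" "m \<ge> 1"
  shows "moebius_power_sum n (p ^ m * k)
           = moebius_power_sum (n ^ p ^ m) k - moebius_power_sum (n ^ p ^ (m - 1)) k"
proof -
  have p_pos: "p > 0"
    using assms(1) prime_gt_0_nat by blast
  have "real n ^ (p ^ m * k div d) = real (n ^ p ^ m) ^ (k div d)
          \<and> real n ^ (p ^ m * k div (p * d)) = real (n ^ p ^ (m - 1)) ^ (k div d)"
    if "d dvd k" for d
  proof -
    from that obtain j where "k = d * j" ..
    moreover have "p ^ m = p * p ^ (m - 1)"
      using \<open>m \<ge> 1\<close> by (cases m) auto
    ultimately show ?thesis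
      using \<open>k > 0\<close> p_pos by (simp add: power_mult)
  qed
  then show ?thesis
    unfolding moebius_power_sum_def
      sum_moebius_divisors_prime_power_mult[OF assms, of "\<lambda>d. real n ^ (p ^ m * k div d)"]
    by (simp add: sum_subtractf[symmetric] algebra_simps)
qed

lemma sum_power_less_power:
  fixes x :: real
  assumes "x \<ge> 2"
  shows "(\<Sum>i<h. x ^ i) < x ^ h"
proof (induction h)
  case 0
  then show ?case by simp
next
  case (Suc h)
  have "2 * x ^ h \<le> x * x ^ h"
    using assms by (intro mult_right_mono) auto
  with Suc show ?case by simp
qed

lemma moebius_power_sum_pos:
  assumes "a \<ge> 2" "r > 0"
  shows "moebius_power_sum a r > 0"
proof -
  define D where "D = {d. d dvd r} - {1}"
  have fin: "finite D"
    using assms unfolding D_def by simp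
  have split: "moebius_power_sum a r
                 = real a ^ r + (\<Sum>d\<in>D. real_of_int (moebius_mu d) * real a ^ (r div d))"
    using assms unfolding moebius_power_sum_def D_def
    by (subst sum.remove[of _ 1]) (auto simp: moebius_mu_def)
  have inj: "inj_on (\<lambda>d. r div d) D"
    using assms by (intro inj_on_inverseI[of _ "\<lambda>j. r div j"]) (auto simp: D_def div_div_eq_right)
  have exponents: "(\<lambda>d. r div d) ` D \<subseteq> {..<r}"
    using assms by (auto simp: D_def elim!: dvdE)
  have "\<bar>\<Sum>d\<in>D. real_of_int (moebius_mu d) * real a ^ (r div d)\<bar> \<le> (\<Sum>d\<in>D. real a ^ (r div d))"
    using abs_moebius_mu_le_1
    by (intro order.trans[OF sum_abs] sum_mono)
       (auto simp: abs_mult mult_left_le_one_le simp flip: of_int_abs)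
  also have "\<dots> = (\<Sum>j \<in> (\<lambda>d. r div d) ` D. real a ^ j)"
    by (simp add: sum.reindex[OF inj])
  also have "\<dots> \<le> (\<Sum>j<r. real a ^ j)"
    by (rule sum_mono2[OF _ exponents]) auto
  also have "\<dots> < real a ^ r"
    using assms by (intro sum_power_less_power) simp
  finally show ?thesis
    unfolding split by linarith
qed

lemma moebius_power_sum_prime_power_mult_le:
  assumes "prime p" "\<not> p dvd k" "k > 0" "n \<ge> 2"
  shows "moebius_power_sum n (p ^ m * k) \<le> moebius_power_sum (n ^ p ^ m) k"
proof (cases "m = 0")
  case False
  have "p ^ (m - 1) \<ge> 1"
    using prime_gt_0_nat[OF assms(1)] by simp
  then have "n ^ 1 \<le> n ^ p ^ (m - 1)"
    using assms by (intro power_increasing) auto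
  then have "moebius_power_sum (n ^ p ^ (m - 1)) k > 0"
    using assms by (intro moebius_power_sum_pos) auto
  then show ?thesis
    using moebius_power_sum_prime_power_mult[OF assms(1-3)] False by simp
qed simp

theorem lemma2p5:
  fixes p n m k :: nat
  assumes "prime p" and "n \<ge> 2" and "k \<ge> 2" and "\<not> p dvd k"
  shows "necklace_w (n ^ (p ^ m)) k / (real (p ^ m) * necklace_w n (p ^ m * k))
           \<ge> 1 - real k / (2 * real n powr (real (p ^ m * k) / 2))"
proof -
  have k_pos: "k > 0" and pmk_pos: "p ^ m * k > 0"
    using assms prime_gt_0_nat by auto
  have "necklace_w (n ^ (p ^ m)) k / (real (p ^ m) * necklace_w n (p ^ m * k))
          = moebius_power_sum (n ^ p ^ m) k / moebius_power_sum n (p ^ m * k)"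
    using pmk_pos k_pos unfolding necklace_w_eq_moebius_power_sum by (simp add: field_simps)
  also have "\<dots> \<ge> 1"
    using moebius_power_sum_pos[OF assms(2) pmk_pos]
      moebius_power_sum_prime_power_mult_le[OF assms(1,4) k_pos assms(2)]
    by simp
  moreover have "real k / (2 * real n powr (real (p ^ m * k) / 2)) \<ge> 0"
    by simp
  ultimately show ?thesis
    by linarith
qed

end
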